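(* Let $m \geq 1$ and let $n = p_1 p_2 \cdots p_m$, where $p_1 < p_2 < \cdots < p_m$ are primes. Then the zero-divisor graph $\Gamma(\mathbb{Z}_n)$ is a very cost effective graph.
   Context: $\mathbb{Z}_n$ is the ring of residue classes modulo $n$. The zero-divisor graph $\Gamma(\mathbb{Z}_n)$ has as vertices the nonzero zero-divisors of $\mathbb{Z}_n$ (nonzero $z$ such that $rz=0$ for some nonzero $r$), two distinct vertices being adjacent iff their product is $0$. For a graph $G=(V,E)$ and $S\subseteq V$, a vertex $v\in S$ is very cost effective if $|N(v)\cap S| < |N(v)\cap (V\setminus S)|$, where $N(v)$ is the open neighborhood of $v$; $S$ is very cost effective if every vertex of $S$ is very cost effective. A bipartition $\{S, V\setminus S\}$ of $V$ is very cost effective if both $S$ and $V\setminus S$ are very cost effective sets, and $G$ is a very cost effective graph if it has a very cost effective bipartition. *)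

theory Defs
  imports "HOL-Computational_Algebra.Primes"
begin

text \<open>Simple graphs are given by a vertex set V and a symmetric irreflexive
adjacency relation E (only its restriction to V matters).\<close>

definition nbhd :: "'a set \<Rightarrow> ('a \<Rightarrow> 'a \<Rightarrow> bool) \<Rightarrow> 'a \<Rightarrow> 'a set" where
  "nbhd V E v = {u \<in> V. E v u}"

definition very_cost_effective_vertex ::
  "'a set \<Rightarrow> ('a \<Rightarrow> 'a \<Rightarrow> bool) \<Rightarrow> 'a set \<Rightarrow> 'a \<Rightarrow> bool" where
  "very_cost_effective_vertex V E S v \<longleftrightarrow>
     card (nbhd V E v \<inter> S) < card (nbhd V E v \<inter> (V - S))"

definition very_cost_effective_set ::
  "'a set \<Rightarrow> ('a \<Rightarrow> 'a \<Rightarrow> bool) \<Rightarrow> 'a set \<Rightarrow> bool" where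
  "very_cost_effective_set V E S \<longleftrightarrow> S \<subseteq> V \<and> (\<forall>v\<in>S. very_cost_effective_vertex V E S v)"

definition very_cost_effective_graph :: "'a set \<Rightarrow> ('a \<Rightarrow> 'a \<Rightarrow> bool) \<Rightarrow> bool" where
  "very_cost_effective_graph V E \<longleftrightarrow>
     (\<exists>S. S \<subseteq> V \<and> very_cost_effective_set V E S \<and> very_cost_effective_set V E (V - S))"

text \<open>Zero-divisor graph of Z_n, residues represented by 0..n-1.\<close>

definition zd_vertices :: "nat \<Rightarrow> nat set" where
  "zd_vertices n = {z. 0 < z \<and> z < n \<and> (\<exists>r. 0 < r \<and> r < n \<and> (r * z) mod n = 0)}"

definition zd_adj :: "nat \<Rightarrow> nat \<Rightarrow> nat \<Rightarrow> bool" where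
  "zd_adj n x y \<longleftrightarrow> x \<noteq> y \<and> (x * y) mod n = 0"

end

theory Submission
  imports Defs "HOL-Number_Theory.Cong"
begin

text \<open>Pick a prime q dividing n exactly once and split the vertices into the non-multiples S
and the multiples of q. A vertex x outside qZ has only multiples of q as neighbours, and it has
at least one neighbour, n / gcd(x, n). For a multiple x of q, adding k = n / q modulo n maps the
q-multiple neighbours of x injectively to neighbours outside qZ, and k itself is such a neighbour
not in the image.\<close>

lemma finite_zd_vertices: "finite (zd_vertices n)"
  unfolding zd_vertices_def by (rule finite_subset[of _ "{..<n}"]) auto

lemma zd_vertices_iff:
  "z \<in> zd_vertices n \<longleftrightarrow> 0 < z \<and> z < n \<and> (\<exists>r. 0 < r \<and> r < n \<and> n dvd r * z)"
  unfolding zd_vertices_def by (simp add: dvd_eq_mod_eq_0)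

lemma zd_verticesI:
  assumes "0 < z" "z < n" "r \<in> zd_vertices n" "n dvd r * z"
  shows "z \<in> zd_vertices n"
  using assms by (auto simp: zd_vertices_iff)

lemma nbhd_zd_graph:
  "nbhd (zd_vertices n) (zd_adj n) x = {y \<in> zd_vertices n. x \<noteq> y \<and> n dvd x * y}"
  unfolding nbhd_def zd_adj_def by (auto simp: dvd_eq_mod_eq_0)

lemma zd_vertex_gcd_gt_1:
  assumes "x \<in> zd_vertices n"
  shows "gcd x n > 1"
proof -
  obtain r where r: "0 < r" "r < n" "n dvd r * x" and "0 < x"
    using assms by (auto simp: zd_vertices_iff)
  have "\<not> coprime n x"
  proof
    assume "coprime n x"
    with r(3) have "n dvd r" by (simp add: coprime_dvd_mult_left_iff)
    with r(1,2) show False by (auto dest: dvd_imp_le)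
  qed
  with \<open>0 < x\<close> show ?thesis
    by (metis coprime_iff_gcd_eq_1 gcd.commute gcd_pos_nat less_one nat_neq_iff)
qed

lemma zd_vertex_cofactor:
  assumes x: "x \<in> zd_vertices n"
  shows "n div gcd x n \<in> zd_vertices n" and "n dvd x * (n div gcd x n)"
proof -
  define g where "g = gcd x n"
  define y where "y = n div g"
  have "0 < x" "x < n" using x by (auto simp: zd_vertices_iff)
  have g: "g > 1" unfolding g_def using zd_vertex_gcd_gt_1[OF x] .
  have gy: "g * y = n" unfolding y_def g_def by simp
  then have "0 < y" using \<open>x < n\<close> by (cases y) auto
  have "y < n" using g \<open>0 < y\<close> gy by (metis mult_less_cancel2 mult_1)
  have "g < n" using \<open>0 < x\<close> \<open>x < n\<close> unfolding g_def
    by (meson dvd_imp_le gcd_dvd1 le_less_trans)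
  obtain x' where "x = g * x'" unfolding g_def by (meson gcd_dvd1 dvdE)
  then have "x * y = x' * n" using gy by (simp add: ac_simps)
  then show "n dvd x * (n div gcd x n)" unfolding y_def g_def by simp
  have "y \<in> zd_vertices n"
    using \<open>0 < y\<close> \<open>y < n\<close> \<open>g < n\<close> g gy
    by (auto simp: zd_vertices_iff intro!: exI[of _ g])
  then show "n div gcd x n \<in> zd_vertices n" unfolding y_def g_def .
qed

lemma very_cost_effective_vertex_non_multiple:
  assumes q: "prime q" and "q dvd n"
    and x: "x \<in> zd_vertices n" "\<not> q dvd x"
  shows "very_cost_effective_vertex (zd_vertices n) (zd_adj n) {v \<in> zd_vertices n. \<not> q dvd v} x"
proof -
  let ?V = "zd_vertices n" and ?N = "nbhd (zd_vertices n) (zd_adj n) x"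
  let ?S = "{v \<in> zd_vertices n. \<not> q dvd v}"
  have multiple: "q dvd y" if "y \<in> ?N" for y
  proof -
    have "q dvd x * y" using that \<open>q dvd n\<close> dvd_trans by (auto simp: nbhd_zd_graph)
    with q x(2) show ?thesis by (simp add: prime_dvd_mult_iff)
  qed
  then have "?N \<inter> ?S = {}" by auto
  moreover have "n div gcd x n \<in> ?N \<inter> (?V - ?S)"
  proof -
    have "q dvd n div gcd x n" using q x(2) \<open>q dvd n\<close>
      by (metis dvd_div_mult_self dvd_trans gcd_dvd1 gcd_dvd2 prime_dvd_mult_iff)
    with zd_vertex_cofactor[OF x(1)] x(2) show ?thesis by (auto simp: nbhd_zd_graph)
  qed
  moreover have "finite (?N \<inter> (?V - ?S))"
    using finite_zd_vertices by (simp add: nbhd_zd_graph)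
  ultimately show ?thesis
    unfolding very_cost_effective_vertex_def by (auto simp: card_gt_0_iff)
qed

lemma card_multiple_neighbours_less:
  assumes q: "prime q" and "q dvd n" and exact: "\<not> q\<^sup>2 dvd n"
    and x: "x \<in> zd_vertices n" "q dvd x"
  defines "N \<equiv> nbhd (zd_vertices n) (zd_adj n) x"
  shows "card {y \<in> N. q dvd y} < card {y \<in> N. \<not> q dvd y}"
proof -
  define k where "k = n div q"
  define shift where "shift y = (y + k) mod n" for y
  have n: "n = q * k" unfolding k_def using \<open>q dvd n\<close> by simp
  have "\<not> q dvd k" using exact n by (auto simp: power2_eq_square)
  then have "0 < k" by (cases k) auto
  have "k < n" using n \<open>0 < k\<close> prime_gt_1_nat[OF q] by simp
  have "0 < x" "x < n" using x(1) by (auto simp: zd_vertices_iff)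
  have "n dvd x * k" using x(2) n by (auto simp: ac_simps)
  have below_n: "y < n" if "y \<in> N" for y
    using that by (auto simp: N_def nbhd_zd_graph zd_vertices_iff)
  have shift_into: "shift ` {y \<in> N. q dvd y} \<subseteq> {y \<in> N. \<not> q dvd y}"
  proof
    fix z assume "z \<in> shift ` {y \<in> N. q dvd y}"
    then obtain y where y: "y \<in> N" "q dvd y" and z: "z = (y + k) mod n"
      unfolding shift_def by auto
    have "q dvd z \<longleftrightarrow> q dvd k"
      using z y(2) \<open>q dvd n\<close> by (simp add: dvd_mod_iff dvd_add_right_iff)
    with \<open>\<not> q dvd k\<close> have "\<not> q dvd z" by simp
    then have "0 < z" by (cases z) auto
    have "n dvd x * (y + k)"
      using y(1) \<open>n dvd x * k\<close> by (simp add: N_def nbhd_zd_graph distrib_left)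
    then have "n dvd x * z"
      using z by (simp add: dvd_eq_mod_eq_0 mod_mult_right_eq)
    moreover have "z < n" using z \<open>0 < x\<close> \<open>x < n\<close> by simp
    ultimately have "z \<in> zd_vertices n"
      using \<open>0 < z\<close> x(1) by (intro zd_verticesI[of z n x]) auto
    with \<open>n dvd x * z\<close> \<open>\<not> q dvd z\<close> x(2) show "z \<in> {y \<in> N. \<not> q dvd y}"
      by (auto simp: N_def nbhd_zd_graph)
  qed
  have inj: "inj_on shift {y \<in> N. q dvd y}"
  proof
    fix y1 y2 assume "y1 \<in> {y \<in> N. q dvd y}" "y2 \<in> {y \<in> N. q dvd y}" "shift y1 = shift y2"
    then have "[y1 = y2] (mod n)" "y1 < n" "y2 < n"
      using below_n unfolding shift_def cong_def[symmetric] by (auto simp: cong_add_rcancel_nat)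
    then show "y1 = y2" unfolding cong_def by simp
  qed
  have k: "k \<in> {y \<in> N. \<not> q dvd y}"
  proof -
    have "k \<in> zd_vertices n"
      using zd_verticesI[OF \<open>0 < k\<close> \<open>k < n\<close> x(1) \<open>n dvd x * k\<close>] .
    with \<open>n dvd x * k\<close> \<open>\<not> q dvd k\<close> x(2) show ?thesis
      by (auto simp: N_def nbhd_zd_graph)
  qed
  have "k \<notin> shift ` {y \<in> N. q dvd y}"
  proof
    assume "k \<in> shift ` {y \<in> N. q dvd y}"
    then obtain y where "y \<in> N" "(y + k) mod n = k" unfolding shift_def by auto
    then have "[y + k = 0 + k] (mod n)" "0 < y" "y < n"
      using \<open>k < n\<close> by (auto simp: cong_def N_def nbhd_zd_graph zd_vertices_iff)
    moreover from this(1) have "[y = 0] (mod n)"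
      using cong_add_rcancel_nat[of y k 0 n] by simp
    ultimately show False by (simp add: cong_def)
  qed
  with shift_into k have "shift ` {y \<in> N. q dvd y} \<subset> {y \<in> N. \<not> q dvd y}" by blast
  moreover have "finite {y \<in> N. \<not> q dvd y}"
    using finite_zd_vertices by (simp add: N_def nbhd_zd_graph)
  ultimately show ?thesis
    using card_image[OF inj] psubset_card_mono by metis
qed

theorem very_cost_effective_zd_graph_exact_prime_divisor:
  assumes q: "prime q" and "q dvd n" and "\<not> q\<^sup>2 dvd n"
  shows "very_cost_effective_graph (zd_vertices n) (zd_adj n)"
proof -
  let ?V = "zd_vertices n" and ?E = "zd_adj n"
  define S where "S = {v \<in> ?V. \<not> q dvd v}"
  have multiples: "nbhd ?V ?E x \<inter> (?V - S) = {y \<in> nbhd ?V ?E x. q dvd y}"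
    and non_multiples: "nbhd ?V ?E x \<inter> (?V - (?V - S)) = {y \<in> nbhd ?V ?E x. \<not> q dvd y}" for x
    unfolding S_def nbhd_def by auto
  have "very_cost_effective_vertex ?V ?E (?V - S) x" if "x \<in> ?V - S" for x
  proof -
    have "x \<in> ?V" "q dvd x" using that unfolding S_def by auto
    then show ?thesis
      using card_multiple_neighbours_less[OF assms] unfolding very_cost_effective_vertex_def
      by (simp only: multiples non_multiples)
  qed
  moreover have "very_cost_effective_vertex ?V ?E S x" if "x \<in> S" for x
    using very_cost_effective_vertex_non_multiple[OF q \<open>q dvd n\<close>, of x] that
    unfolding S_def by auto
  ultimately show ?thesis
    unfolding very_cost_effective_graph_def very_cost_effective_set_def
    by (intro exI[of _ S]) (auto simp: S_def)
qed

theorem mainTheorem1: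
  fixes m n :: nat and p :: "nat \<Rightarrow> nat"
  assumes "m \<ge> 1"
    and "\<forall>i\<in>{1..m}. prime (p i)"
    and "\<forall>i\<in>{1..m}. \<forall>j\<in>{1..m}. i < j \<longrightarrow> p i < p j"
    and "n = (\<Prod>i\<in>{1..m}. p i)"
  shows "very_cost_effective_graph (zd_vertices n) (zd_adj n)"
proof (rule very_cost_effective_zd_graph_exact_prime_divisor)
  have "{1..m} = insert 1 {2..m}" using assms(1) by auto
  then have n: "n = p 1 * (\<Prod>i\<in>{2..m}. p i)" using assms(4) by simp
  show q: "prime (p 1)" using assms(1,2) by auto
  show "p 1 dvd n" using n by simp
  have "\<not> p 1 dvd (\<Prod>i\<in>{2..m}. p i)"
  proof
    assume "p 1 dvd (\<Prod>i\<in>{2..m}. p i)"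
    then obtain i where i: "i \<in> {2..m}" "p 1 dvd p i" using q by (auto simp: prime_dvd_prod_iff)
    then have "p 1 = p i" using assms(2) q by (simp add: primes_dvd_imp_eq)
    moreover have "p 1 < p i" using assms(1,3) i by auto
    ultimately show False by simp
  qed
  then show "\<not> (p 1)\<^sup>2 dvd n" using n q by (simp add: power2_eq_square prime_gt_0_nat)
qed

end
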